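(* Let $f\in\mathbb R[x_1,\ldots,x_d]$ be a convenient non-degenerate weighted homogeneous polynomial and let $\delta_i$ be the exponent of the pure monomial $x_i^{\delta_i}$ of $f$. Let $B_f(T)=\frac{(\mathbb L-\mathbb 1)^d}{\mathbb 1-T}\sum_{\tau\in\Gamma_f^c}S_{\sigma(\tau)}(T)$. Then, in $\widehat{\mathcal M}[[T]]$, $$B_f(T)-\frac{T}{\mathbb 1-T}=-\sum_{m\ge1}\mathbb L^{-\sum_{i=1}^d\lfloor m/\delta_i\rfloor}T^m.$$
   Context: $\mathcal{AS}$-sets: semialgebraic $S\subset\mathbb P^n_{\mathbb R}$ such that for every real analytic arc $\gamma:(-1,1)\to\mathbb P^n_{\mathbb R}$ with $\gamma((-1,0))\subset S$ there is $\varepsilon>0$ with $\gamma((0,\varepsilon))\subset S$. $K_0(\mathcal{AS})$ is their Grothendieck ring (scissor relations, bijections with $\mathcal{AS}$ graph, cartesian product). For $n\ge1$, $K_0(\mathcal{AS}^n_{\mathrm{mon}})$ is the Grothendieck group of symbols $[\varphi_X:\mathbb R^*\circlearrowright X\to\mathbb R^*]$ ($X$ an $\mathcal{AS}$-set with $\mathbb R^*$-action and $\varphi_X$ both with $\mathcal{AS}$ graphs, $\varphi_X(\lambda x)=\lambda^n\varphi_X(x)$), modulo equivariant $\mathcal{AS}$-bijections over $\mathbb R^*$, scissor relations for invariant closed $\mathcal{AS}$-subsets, and independence of the choice of lifting of the action to $Y\times\mathbb R^m$ for symbols $\varphi_Y\circ\operatorname{pr}_Y$; product is fiber product over $\mathbb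 R^*$; $K_0(\mathcal{AS})$ acts by $[A]\cdot[\varphi_X]=[\varphi_X\circ\operatorname{pr}_X:A\times X\to\mathbb R^*]$ (trivial action on $A$). $K_0(\mathcal{AS}_{\mathrm{mon}})=\varinjlim_n K_0(\mathcal{AS}^n_{\mathrm{mon}})$ (for $n=km$, a level-$m$ action $\lambda\cdot x$ becomes $\lambda^k\cdot x$). $\mathbb 1=[\mathrm{id}:\mathbb R^*\to\mathbb R^*]$ with $\lambda\cdot r=\lambda r$, $\mathbb L=[\mathbb R]\cdot\mathbb 1$, $\mathcal M=K_0(\mathcal{AS}_{\mathrm{mon}})[\mathbb L^{-1}]$, and $\widehat{\mathcal M}$ is the completion of $\mathcal M$ with respect to the filtration $\mathcal F^m\mathcal M$ spanned by $[S]\mathbb L^{-i}$ with $i-\dim S\ge m$. For $f=\sum c_\nu x^\nu$: $\Gamma_f=\operatorname{Conv}(\bigcup_{c_\nu\neq0}(\nu+\mathbb R^d_{\ge0}))$ is the Newton polyhedron, $\Gamma_f^c$ its set of compact faces, $f_\tau=\sum_{\nu\in\tau}c_\nu x^\nu$, $m(k)=\inf\{k\cdot x:x\in\Gamma_f\}$, $\sigma(\tau)=\{k\in\mathbb R^d_{\ge0}:\{x\in\Gamma_f:k\cdot x=m(k)\}=\tau\}$, $S_{\sigma(\tau)}(T)=\sum_{k\in\sigma(\tau)\cap\mathbb N^d}\mathbb L^{-|k|}T^{m(k)}$, $|k|=\sum_ik_i$. $f$ is convenient if each $x_i^{\delta_i}$ ($\delta_i\ge1$) appears in $f$; non-degenerate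 if for every $\tau\in\Gamma_f^c$ the partials of $f_\tau$ have no common zero in $(\mathbb R^* )^d$; weighted homogeneous if $f(\lambda^{w_1}x_1,\ldots,\lambda^{w_d}x_d)=\lambda^wf(x)$ for some $w_i,w\in\mathbb N_{>0}$ and all $\lambda\in\mathbb R$. *)

theory Defs
  imports "HOL-Analysis.Analysis" "HOL-Computational_Algebra.Formal_Laurent_Series"
begin

text \<open>Real polynomials in the variables x_i, i ranging over a finite index type 'n
  (so d = CARD('n)), are represented by their coefficient function
  c :: ('n \<Rightarrow> nat) \<Rightarrow> real (exponent vector \<mapsto> coefficient), of finite support.\<close>

definition mono_supp :: "(('n::finite \<Rightarrow> nat) \<Rightarrow> real) \<Rightarrow> ('n \<Rightarrow> nat) set" where
  "mono_supp c = {\<nu>. c \<nu> \<noteq> 0}"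

definition is_poly :: "(('n::finite \<Rightarrow> nat) \<Rightarrow> real) \<Rightarrow> bool" where
  "is_poly c \<longleftrightarrow> finite (mono_supp c)"

definition poly_eval :: "(('n::finite \<Rightarrow> nat) \<Rightarrow> real) \<Rightarrow> real^'n \<Rightarrow> real" where
  "poly_eval c x = (\<Sum>\<nu>\<in>mono_supp c. c \<nu> * (\<Prod>i\<in>UNIV. (x $ i) ^ \<nu> i))"

definition poly_pderiv :: "'n::finite \<Rightarrow> (('n \<Rightarrow> nat) \<Rightarrow> real) \<Rightarrow> (('n \<Rightarrow> nat) \<Rightarrow> real)" where
  "poly_pderiv j c = (\<lambda>\<nu>. real (\<nu> j + 1) * c (\<nu>(j := \<nu> j + 1)))"

definition exp_vec :: "('n::finite \<Rightarrow> nat) \<Rightarrow> real^'n" where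
  "exp_vec \<nu> = (\<chi> i. real (\<nu> i))"

definition pure_exp :: "'n \<Rightarrow> nat \<Rightarrow> ('n \<Rightarrow> nat)" where
  "pure_exp i e = (\<lambda>j. if j = i then e else 0)"

definition nonneg_orthant :: "(real^'n::finite) set" where
  "nonneg_orthant = {x. \<forall>i. 0 \<le> x $ i}"

definition newton_polyhedron :: "(('n::finite \<Rightarrow> nat) \<Rightarrow> real) \<Rightarrow> (real^'n) set" where
  "newton_polyhedron c =
     convex hull (\<Union>\<nu>\<in>mono_supp c. (\<lambda>y. exp_vec \<nu> + y) ` nonneg_orthant)"

definition compact_faces :: "(('n::finite \<Rightarrow> nat) \<Rightarrow> real) \<Rightarrow> (real^'n) set set" where
  "compact_faces c = {\<tau>. \<tau> face_of newton_polyhedron c \<and> compact \<tau> \<and> \<tau> \<noteq> {}}"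

definition face_part :: "(('n::finite \<Rightarrow> nat) \<Rightarrow> real) \<Rightarrow> (real^'n) set \<Rightarrow> (('n \<Rightarrow> nat) \<Rightarrow> real)" where
  "face_part c \<tau> = (\<lambda>\<nu>. if exp_vec \<nu> \<in> \<tau> then c \<nu> else 0)"

definition mfun :: "(('n::finite \<Rightarrow> nat) \<Rightarrow> real) \<Rightarrow> real^'n \<Rightarrow> real" where
  "mfun c k = Inf ((\<lambda>x. k \<bullet> x) ` newton_polyhedron c)"

definition sigma_cone :: "(('n::finite \<Rightarrow> nat) \<Rightarrow> real) \<Rightarrow> (real^'n) set \<Rightarrow> (real^'n) set" where
  "sigma_cone c \<tau> = {k \<in> nonneg_orthant.
      {x \<in> newton_polyhedron c. k \<bullet> x = mfun c k} = \<tau>}"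

definition convenient :: "(('n::finite \<Rightarrow> nat) \<Rightarrow> real) \<Rightarrow> bool" where
  "convenient c \<longleftrightarrow> (\<forall>i. \<exists>e\<ge>1. c (pure_exp i e) \<noteq> 0)"

definition non_degenerate :: "(('n::finite \<Rightarrow> nat) \<Rightarrow> real) \<Rightarrow> bool" where
  "non_degenerate c \<longleftrightarrow> (\<forall>\<tau>\<in>compact_faces c.
      \<not> (\<exists>x::real^'n. (\<forall>i. x $ i \<noteq> 0) \<and>
             (\<forall>j. poly_eval (poly_pderiv j (face_part c \<tau>)) x = 0)))"

definition weighted_homogeneous :: "(('n::finite \<Rightarrow> nat) \<Rightarrow> real) \<Rightarrow> bool" where
  "weighted_homogeneous c \<longleftrightarrow> (\<exists>(w::'n \<Rightarrow> nat) (w0::nat). (\<forall>i. w i > 0) \<and> w0 > 0 \<and>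
      (\<forall>(t::real) x. poly_eval c (\<chi> i. t ^ w i * x $ i) = t ^ w0 * poly_eval c x))"

text \<open>The completed coefficient ring: Laurent series in u = L^{-1} over the integers.
  L is fls_X_inv, L^{-1} is fls_X, the unit \<one> is 1. The series ring is (int fls) fps,
  with T = fps_X.\<close>

abbreviation LL :: "int fls" where "LL \<equiv> fls_X_inv"
abbreviation LLinv :: "int fls" where "LLinv \<equiv> fls_X"

text \<open>S_{\<sigma>(\<tau>)}(T) = \<Sum>_{k\<in>\<sigma>(\<tau>)\<inter>N^d} L^{-|k|} T^{m(k)}, written coefficientwise:
  the coefficient of T^m u^n counts the lattice points k with |k| = n and m(k) = m.\<close>
definition S_sigma :: "(('n::finite \<Rightarrow> nat) \<Rightarrow> real) \<Rightarrow> (real^'n) set \<Rightarrow> int fls fps" where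
  "S_sigma c \<tau> = Abs_fps (\<lambda>m. fps_to_fls (Abs_fps (\<lambda>n.
      int (card {k :: 'n \<Rightarrow> nat. exp_vec k \<in> sigma_cone c \<tau> \<and> sum k UNIV = n
                                \<and> mfun c (exp_vec k) = real m}))))"

definition geom_T :: "int fls fps" where
  "geom_T = Abs_fps (\<lambda>_. 1)"

definition B_f :: "(('n::finite \<Rightarrow> nat) \<Rightarrow> real) \<Rightarrow> int fls fps" where
  "B_f c = fps_const ((LL - 1) ^ CARD('n)) * geom_T * (\<Sum>\<tau>\<in>compact_faces c. S_sigma c \<tau>)"

end

theory Submission
  imports Defs
begin

text \<open>
  Weighted homogeneity and the pure monomials x_i^\<delta>_i put every exponent of f on the
  simplex \<Sum>_i \<nu>_i/\<delta>_i = 1, so \<Gamma>_f is the region {x \<ge> 0 | \<Sum>_i x_i/\<delta>_i \<ge> 1}.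
  For a lattice vector k its supporting face has level m(k) = min_i k_i \<delta>_i and is
  compact iff all k_i > 0; hence the cones \<sigma>(\<tau>) of the compact faces partition the
  positive lattice points, and \<Sum>_\<tau> S_\<sigma>(\<tau>) counts positive k by |k| and m(k).
  For m > 0 the k with m(k) \<ge> m form the orthant k_i \<ge> \<lfloor>(m-1)/\<delta>_i\<rfloor> + 1, whose
  generating function in u = L^-1 is u^(\<Sum>_i (\<lfloor>(m-1)/\<delta>_i\<rfloor> + 1)) / (1-u)^d. Taking
  differences in m and multiplying by (L-1)^d = L^d (1-u)^d, the coefficient of T^m
  becomes u^(\<Sum>_i \<lfloor>(m-1)/\<delta>_i\<rfloor>) - u^(\<Sum>_i \<lfloor>m/\<delta>_i\<rfloor>), which telescopes after
  division by 1 - T.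
\<close>

section \<open>Vanishing polynomial functions\<close>

lemma sum_coeffs_of_degree_eq_0:
  fixes b :: "'a \<Rightarrow> 'b::{idom,ring_char_0}"
  assumes "finite S" and "\<And>y. (\<Sum>\<nu>\<in>S. b \<nu> * y ^ g \<nu>) = a * y ^ d" and "e \<noteq> d"
  shows "(\<Sum>\<nu>\<in>{\<nu>\<in>S. g \<nu> = e}. b \<nu>) = 0"
proof -
  have "poly (\<Sum>\<nu>\<in>S. monom (b \<nu>) (g \<nu>)) = poly (monom a d)"
    using assms(2) by (simp add: poly_sum poly_monom fun_eq_iff mult.commute)
  then have "coeff (\<Sum>\<nu>\<in>S. monom (b \<nu>) (g \<nu>)) e = coeff (monom a d) e"
    by (simp only: poly_eq_poly_eq_iff)
  then show ?thesis
    using assms(1,3) by (simp add: coeff_sum coeff_monom sum.inter_filter)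
qed

lemma sum_monomials_eq_0_imp_coeff_sums_eq_0:
  fixes a :: "('n::finite \<Rightarrow> nat) \<Rightarrow> 'b::{idom,ring_char_0}"
  assumes "finite S" and "\<And>x::'b^'n. (\<Sum>\<nu>\<in>S. a \<nu> * (\<Prod>i\<in>V. (x$i) ^ \<nu> i)) = 0"
  shows "(\<Sum>\<nu>\<in>{\<nu>\<in>S. \<forall>i\<in>V. \<nu> i = \<mu> i}. a \<nu>) = 0"
  using assms
proof (induction V arbitrary: S rule: finite_induct[OF finite])
  case 1
  then show ?case by simp
next
  case (2 j V)
  let ?S = "{\<nu>\<in>S. \<nu> j = \<mu> j}"
  have "(\<Sum>\<nu>\<in>?S. a \<nu> * (\<Prod>i\<in>V. (x$i) ^ \<nu> i)) = 0" for x :: "'b^'n"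
  proof (rule sum_coeffs_of_degree_eq_0[where a = 0 and d = "Suc (\<mu> j)"
      and b = "\<lambda>\<nu>. a \<nu> * (\<Prod>i\<in>V. (x$i) ^ \<nu> i)" and g = "\<lambda>\<nu>. \<nu> j" and e = "\<mu> j"])
    fix y
    let ?x = "\<chi> i. if i = j then y else x$i"
    have "(\<Prod>i\<in>insert j V. (?x$i) ^ \<nu> i) = (\<Prod>i\<in>V. (x$i) ^ \<nu> i) * y ^ \<nu> j" for \<nu>
    proof -
      have "(\<Prod>i\<in>V. (?x$i) ^ \<nu> i) = (\<Prod>i\<in>V. (x$i) ^ \<nu> i)"
        using "2.hyps"(2) by (intro prod.cong) auto
      then show ?thesis
        using "2.hyps" by (simp add: mult.commute)
    qed
    then show "(\<Sum>\<nu>\<in>S. a \<nu> * (\<Prod>i\<in>V. (x$i) ^ \<nu> i) * y ^ \<nu> j) = 0 * y ^ Suc (\<mu> j)"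
      using "2.prems"(2)[of ?x] by (simp add: mult.assoc)
  qed (use "2.prems"(1) in auto)
  then have "(\<Sum>\<nu>\<in>{\<nu>\<in>?S. \<forall>i\<in>V. \<nu> i = \<mu> i}. a \<nu>) = 0"
    using "2.IH"[of ?S] "2.prems"(1) by simp
  moreover have "{\<nu>\<in>?S. \<forall>i\<in>V. \<nu> i = \<mu> i} = {\<nu>\<in>S. \<forall>i\<in>insert j V. \<nu> i = \<mu> i}"
    by auto
  ultimately show ?case by simp
qed

lemma sum_monomials_eq_0_imp_coeff_eq_0:
  fixes a :: "('n::finite \<Rightarrow> nat) \<Rightarrow> 'b::{idom,ring_char_0}"
  assumes "finite S" and "\<And>x::'b^'n. (\<Sum>\<nu>\<in>S. a \<nu> * (\<Prod>i\<in>UNIV. (x$i) ^ \<nu> i)) = 0"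
    and "\<nu> \<in> S"
  shows "a \<nu> = 0"
proof -
  have "{\<mu>\<in>S. \<forall>i\<in>UNIV. \<mu> i = \<nu> i} = {\<nu>}"
    using assms(3) by auto
  then show ?thesis
    using sum_monomials_eq_0_imp_coeff_sums_eq_0[OF assms(1,2), of \<nu>] by simp
qed

section \<open>The region above a simplex\<close>

lemma exp_vec_pure_exp: "exp_vec (pure_exp i e) = axis i (real e)"
  by (simp add: exp_vec_def pure_exp_def axis_def vec_eq_iff)

lemma inner_exp_vec: "exp_vec k \<bullet> x = (\<Sum>i\<in>UNIV. real (k i) * x $ i)"
  by (simp add: exp_vec_def inner_vec_def)

lemma exp_vec_nth [simp]: "exp_vec k $ i = real (k i)"
  by (simp add: exp_vec_def)

lemma exp_vec_mem_nonneg_orthant: "exp_vec k \<in> nonneg_orthant"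
  by (simp add: nonneg_orthant_def)

lemma axis_mem_nonneg_orthant: "0 \<le> t \<Longrightarrow> axis i t \<in> nonneg_orthant"
  by (simp add: nonneg_orthant_def axis_def)

definition recip_vec :: "('n::finite \<Rightarrow> nat) \<Rightarrow> real^'n" where
  "recip_vec \<delta> = (\<chi> i. 1 / real (\<delta> i))"

definition weighted_min :: "('n::finite \<Rightarrow> nat) \<Rightarrow> ('n \<Rightarrow> nat) \<Rightarrow> nat" where
  "weighted_min \<delta> k = Min (range (\<lambda>i. k i * \<delta> i))"

lemma weighted_min_le: "weighted_min \<delta> k \<le> k i * \<delta> i"
  unfolding weighted_min_def by (rule Min_le) auto

lemma weighted_min_attained:
  obtains j where "weighted_min \<delta> k = k j * \<delta> j"
proof -
  have "weighted_min \<delta> k \<in> range (\<lambda>i. k i * \<delta> i)"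
    unfolding weighted_min_def by (rule Min_in) auto
  then show ?thesis
    using that by blast
qed

lemma le_weighted_min_iff: "m \<le> weighted_min \<delta> k \<longleftrightarrow> (\<forall>i. m \<le> k i * \<delta> i)"
  unfolding weighted_min_def by (subst Min_ge_iff) auto

lemma le_weighted_min_iff_lower_bounds:
  assumes "\<forall>i. 0 < \<delta> i" and "0 < m"
  shows "m \<le> weighted_min \<delta> k \<longleftrightarrow> (\<forall>i. (m - 1) div \<delta> i + 1 \<le> k i)"
proof -
  have "m \<le> k i * \<delta> i \<longleftrightarrow> (m - 1) div \<delta> i < k i" for i
  proof -
    have "(m - 1) div \<delta> i < k i \<longleftrightarrow> m - 1 < k i * \<delta> i"
      using assms(1) by (simp add: div_less_iff_less_mult)
    then show ?thesis
      using assms(2) by linarith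
  qed
  then show ?thesis
    by (simp add: le_weighted_min_iff Suc_le_eq)
qed

lemma weighted_min_pos:
  assumes "\<forall>i. 0 < \<delta> i" and "\<forall>i. 0 < k i"
  shows "0 < weighted_min \<delta> k"
  by (metis assms weighted_min_attained nat_0_less_mult_iff)

definition simplex_polyhedron :: "('n::finite \<Rightarrow> nat) \<Rightarrow> (real^'n) set" where
  "simplex_polyhedron \<delta> = nonneg_orthant \<inter> {x. 1 \<le> recip_vec \<delta> \<bullet> x}"

definition supporting_face :: "('n::finite \<Rightarrow> nat) \<Rightarrow> ('n \<Rightarrow> nat) \<Rightarrow> (real^'n) set" where
  "supporting_face \<delta> k = simplex_polyhedron \<delta> \<inter> {x. exp_vec k \<bullet> x = real (weighted_min \<delta> k)}"

lemma convex_nonneg_orthant: "convex nonneg_orthant"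
  unfolding nonneg_orthant_def by (rule convex_box_cart) (simp add: atLeast_def[symmetric])

lemma convex_simplex_polyhedron: "convex (simplex_polyhedron \<delta>)"
  unfolding simplex_polyhedron_def
  by (intro convex_Int convex_nonneg_orthant convex_halfspace_ge)

lemma closed_simplex_polyhedron: "closed (simplex_polyhedron \<delta>)"
  unfolding simplex_polyhedron_def nonneg_orthant_def
  by (intro closed_Int closed_positive_orthant closed_halfspace_ge)

lemma simplex_polyhedron_add_nonneg:
  assumes "x \<in> simplex_polyhedron \<delta>" and "y \<in> nonneg_orthant"
  shows "x + y \<in> simplex_polyhedron \<delta>"
proof -
  have "0 \<le> recip_vec \<delta> \<bullet> y"
    using assms(2) by (auto simp: recip_vec_def nonneg_orthant_def inner_vec_def intro: sum_nonneg)
  then show ?thesis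
    using assms by (auto simp: simplex_polyhedron_def nonneg_orthant_def inner_add_right)
qed

lemma pure_exp_mem_simplex_polyhedron:
  assumes "0 < \<delta> i"
  shows "exp_vec (pure_exp i (\<delta> i)) \<in> simplex_polyhedron \<delta>"
  using assms axis_mem_nonneg_orthant[of "real (\<delta> i)" i]
  by (simp add: simplex_polyhedron_def exp_vec_pure_exp inner_axis recip_vec_def)

lemma weighted_min_le_inner:
  assumes "\<forall>i. 0 < \<delta> i" and "x \<in> simplex_polyhedron \<delta>"
  shows "real (weighted_min \<delta> k) \<le> exp_vec k \<bullet> x"
proof -
  have x: "0 \<le> x $ i" "1 \<le> recip_vec \<delta> \<bullet> x" for i
    using assms(2) by (auto simp: simplex_polyhedron_def nonneg_orthant_def)
  have "real (weighted_min \<delta> k) \<le> real (weighted_min \<delta> k) * (recip_vec \<delta> \<bullet> x)"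
    using x(2) by (simp add: mult_le_cancel_left1)
  also have "\<dots> = (\<Sum>i\<in>UNIV. (real (weighted_min \<delta> k) / real (\<delta> i)) * x $ i)"
    by (simp add: recip_vec_def inner_vec_def sum_distrib_left)
  also have "\<dots> \<le> (\<Sum>i\<in>UNIV. real (k i) * x $ i)"
  proof (intro sum_mono mult_right_mono x(1))
    fix i
    have "real (weighted_min \<delta> k) \<le> real (k i) * real (\<delta> i)"
      using weighted_min_le[of \<delta> k i] by (simp flip: of_nat_mult)
    then show "real (weighted_min \<delta> k) / real (\<delta> i) \<le> real (k i)"
      using assms(1) by (simp add: divide_le_eq)
  qed
  finally show ?thesis
    by (simp add: inner_exp_vec)
qed

lemma weighted_min_attained_in_simplex_polyhedron:
  assumes "\<forall>i. 0 < \<delta> i"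
  obtains v where "v \<in> simplex_polyhedron \<delta>" and "exp_vec k \<bullet> v = real (weighted_min \<delta> k)"
proof -
  obtain j where "weighted_min \<delta> k = k j * \<delta> j"
    using weighted_min_attained by blast
  then have "exp_vec k \<bullet> exp_vec (pure_exp j (\<delta> j)) = real (weighted_min \<delta> k)"
    by (simp add: exp_vec_pure_exp inner_axis)
  then show ?thesis
    using that pure_exp_mem_simplex_polyhedron assms by blast
qed

lemma Inf_inner_simplex_polyhedron:
  assumes "\<forall>i. 0 < \<delta> i"
  shows "Inf ((\<lambda>x. exp_vec k \<bullet> x) ` simplex_polyhedron \<delta>) = real (weighted_min \<delta> k)"
proof (rule cInf_eq_minimum)
  obtain v where "v \<in> simplex_polyhedron \<delta>" "exp_vec k \<bullet> v = real (weighted_min \<delta> k)"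
    using weighted_min_attained_in_simplex_polyhedron[OF assms] .
  then show "real (weighted_min \<delta> k) \<in> (\<lambda>x. exp_vec k \<bullet> x) ` simplex_polyhedron \<delta>"
    by (metis image_eqI)
qed (use weighted_min_le_inner[OF assms] in auto)

lemma supporting_face_face_of:
  assumes "\<forall>i. 0 < \<delta> i"
  shows "supporting_face \<delta> k face_of simplex_polyhedron \<delta>"
  unfolding supporting_face_def
  by (rule face_of_Int_supporting_hyperplane_ge[OF convex_simplex_polyhedron])
    (use weighted_min_le_inner[OF assms] in auto)

lemma supporting_face_nonempty:
  assumes "\<forall>i. 0 < \<delta> i"
  shows "supporting_face \<delta> k \<noteq> {}"
  using weighted_min_attained_in_simplex_polyhedron[OF assms, of k]
  unfolding supporting_face_def by blast

lemma compact_supporting_face: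
  assumes "\<forall>i. 0 < k i"
  shows "compact (supporting_face \<delta> k)"
proof -
  have "supporting_face \<delta> k \<subseteq> cbox 0 (\<chi> i. real (weighted_min \<delta> k) / real (k i))"
  proof
    fix x
    assume x: "x \<in> supporting_face \<delta> k"
    then have x_nonneg: "0 \<le> x $ i" for i
      by (simp add: supporting_face_def simplex_polyhedron_def nonneg_orthant_def)
    have "real (k i) * x $ i \<le> (\<Sum>i\<in>UNIV. real (k i) * x $ i)" for i
      by (rule member_le_sum) (use x_nonneg in auto)
    also have "\<dots> = real (weighted_min \<delta> k)"
      using x by (simp add: supporting_face_def inner_exp_vec)
    finally show "x \<in> cbox 0 (\<chi> i. real (weighted_min \<delta> k) / real (k i))"
      using assms x_nonneg by (simp add: mem_box_cart le_divide_eq mult.commute)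
  qed
  moreover have "closed (supporting_face \<delta> k)"
    unfolding supporting_face_def by (intro closed_Int closed_simplex_polyhedron closed_hyperplane)
  ultimately show ?thesis
    by (meson bounded_cbox bounded_subset compact_eq_bounded_closed)
qed

lemma not_compact_supporting_face:
  assumes "\<forall>i. 0 < \<delta> i" and "k j = 0"
  shows "\<not> compact (supporting_face \<delta> k)"
proof
  assume "compact (supporting_face \<delta> k)"
  then obtain B where B: "\<And>x. x \<in> supporting_face \<delta> k \<Longrightarrow> norm x \<le> B"
    by (meson compact_imp_bounded bounded_iff)
  obtain v where v: "v \<in> simplex_polyhedron \<delta>" "exp_vec k \<bullet> v = real (weighted_min \<delta> k)"
    using weighted_min_attained_in_simplex_polyhedron[OF assms(1)] .
  define t where "t = \<bar>B\<bar> + 1"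
  have "axis j t \<in> nonneg_orthant"
    by (simp add: axis_mem_nonneg_orthant t_def)
  then have "v + axis j t \<in> supporting_face \<delta> k"
    using v assms(2) simplex_polyhedron_add_nonneg
    by (simp add: supporting_face_def inner_add_right inner_axis)
  then have "\<bar>v $ j + t\<bar> \<le> B"
    using B component_le_norm_cart[of "v + axis j t" j] by force
  moreover have "0 \<le> v $ j"
    using v(1) by (simp add: simplex_polyhedron_def nonneg_orthant_def)
  ultimately show False
    by (simp add: t_def)
qed

lemma compact_supporting_face_iff:
  assumes "\<forall>i. 0 < \<delta> i"
  shows "compact (supporting_face \<delta> k) \<longleftrightarrow> (\<forall>i. 0 < k i)"
  using compact_supporting_face not_compact_supporting_face[OF assms] by blast

section \<open>The Newton polyhedron of a weighted homogeneous polynomial\<close>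

lemma poly_eval_weighted_scaling:
  "poly_eval c (\<chi> i. t ^ w i * x $ i)
     = (\<Sum>\<nu>\<in>mono_supp c. c \<nu> * (\<Prod>i\<in>UNIV. (x $ i) ^ \<nu> i) * t ^ (\<Sum>i\<in>UNIV. w i * \<nu> i))"
proof -
  have "t ^ (\<Sum>i\<in>UNIV. w i * \<nu> i) = (\<Prod>i\<in>UNIV. (t ^ w i) ^ \<nu> i)" for \<nu> :: "'a \<Rightarrow> nat"
    by (simp add: power_sum power_mult)
  then show ?thesis
    by (simp add: poly_eval_def power_mult_distrib prod.distrib mult_ac)
qed

lemma weighted_homogeneous_supp_on_hyperplane:
  fixes c :: "('n::finite \<Rightarrow> nat) \<Rightarrow> real"
  assumes "is_poly c" and "weighted_homogeneous c"
  obtains w :: "'n \<Rightarrow> nat" and d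
  where "\<forall>i. 0 < w i" and "\<forall>\<nu>\<in>mono_supp c. (\<Sum>i\<in>UNIV. w i * \<nu> i) = d"
proof -
  obtain w :: "'n \<Rightarrow> nat" and d where w: "\<forall>i. 0 < w i"
    and hom: "\<And>t x. poly_eval c (\<chi> i. t ^ w i * x $ i) = t ^ d * poly_eval c x"
    using assms(2) unfolding weighted_homogeneous_def by blast
  define g where "g \<nu> = (\<Sum>i\<in>UNIV. w i * \<nu> i)" for \<nu> :: "'n \<Rightarrow> nat"
  have fin: "finite (mono_supp c)"
    using assms(1) by (simp add: is_poly_def)
  have "g \<nu> = d" if \<nu>: "\<nu> \<in> mono_supp c" for \<nu>
  proof (rule ccontr)
    assume "g \<nu> \<noteq> d"
    have vanish: "(\<Sum>\<mu>\<in>{\<mu>\<in>mono_supp c. g \<mu> = g \<nu>}. c \<mu> * (\<Prod>i\<in>UNIV. (x $ i) ^ \<mu> i)) = 0"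
      for x :: "real^'n"
    proof (rule sum_coeffs_of_degree_eq_0[where a = "poly_eval c x" and d = d])
      fix t :: real
      have "(\<Sum>\<mu>\<in>mono_supp c. c \<mu> * (\<Prod>i\<in>UNIV. (x $ i) ^ \<mu> i) * t ^ g \<mu>)
          = poly_eval c (\<chi> i. t ^ w i * x $ i)"
        by (simp only: poly_eval_weighted_scaling g_def)
      also have "\<dots> = poly_eval c x * t ^ d"
        by (subst hom) (rule mult.commute)
      finally show "(\<Sum>\<mu>\<in>mono_supp c. c \<mu> * (\<Prod>i\<in>UNIV. (x $ i) ^ \<mu> i) * t ^ g \<mu>)
          = poly_eval c x * t ^ d" .
    qed fact+
    have "c \<nu> = 0"
      by (rule sum_monomials_eq_0_imp_coeff_eq_0[OF _ vanish]) (use fin \<nu> in auto)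
    with \<nu> show False
      by (simp add: mono_supp_def)
  qed
  with w show ?thesis
    by (intro that[of w d]) (auto simp: g_def)
qed

lemma weighted_homogeneous_supp_on_simplex:
  fixes c :: "('n::finite \<Rightarrow> nat) \<Rightarrow> real"
  assumes "is_poly c" and "weighted_homogeneous c"
    and \<delta>: "\<forall>i. \<delta> i \<ge> 1 \<and> c (pure_exp i (\<delta> i)) \<noteq> 0"
  shows "\<forall>\<nu>\<in>mono_supp c. recip_vec \<delta> \<bullet> exp_vec \<nu> = 1"
proof
  obtain w :: "'n \<Rightarrow> nat" and d where w: "\<forall>i. 0 < w i"
    and hyp: "\<forall>\<nu>\<in>mono_supp c. (\<Sum>i\<in>UNIV. w i * \<nu> i) = d"
    using weighted_homogeneous_supp_on_hyperplane[OF assms(1,2)] by blast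
  have wd: "real (w i) * real (\<delta> i) = real d" for i
  proof -
    have "pure_exp i (\<delta> i) \<in> mono_supp c"
      using \<delta> by (simp add: mono_supp_def)
    then have "(\<Sum>j\<in>UNIV. w j * pure_exp i (\<delta> i) j) = d"
      using hyp by blast
    then show ?thesis
      by (simp add: pure_exp_def if_distrib cong: if_cong flip: of_nat_mult)
  qed
  have pos: "0 < real (\<delta> i)" "0 < real (w i)" for i
    using w \<delta> by (auto simp: Suc_le_eq)
  fix \<nu>
  assume "\<nu> \<in> mono_supp c"
  then have "(\<Sum>i\<in>UNIV. real (w i) * real (\<nu> i)) = real d"
    using hyp by (simp flip: of_nat_mult of_nat_sum)
  moreover have "real (\<nu> i) / real (\<delta> i) = real (w i) * real (\<nu> i) / real d" for i
    using wd[of i, symmetric] pos[of i] by (simp add: field_simps)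
  moreover have "0 < real d"
    using wd pos by (metis mult_pos_pos)
  ultimately show "recip_vec \<delta> \<bullet> exp_vec \<nu> = 1"
    by (simp add: recip_vec_def inner_vec_def sum_divide_distrib[symmetric])
qed

lemma newton_polyhedron_eq_simplex_polyhedron:
  assumes \<delta>: "\<forall>i. \<delta> i \<ge> 1 \<and> c (pure_exp i (\<delta> i)) \<noteq> 0"
    and supp: "\<forall>\<nu>\<in>mono_supp c. recip_vec \<delta> \<bullet> exp_vec \<nu> = 1"
  shows "newton_polyhedron c = simplex_polyhedron \<delta>"
proof
  have "exp_vec \<nu> + y \<in> simplex_polyhedron \<delta>" if "\<nu> \<in> mono_supp c" "y \<in> nonneg_orthant" for \<nu> y
    using that supp exp_vec_mem_nonneg_orthant
    by (intro simplex_polyhedron_add_nonneg) (auto simp: simplex_polyhedron_def)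
  then show "newton_polyhedron c \<subseteq> simplex_polyhedron \<delta>"
    unfolding newton_polyhedron_def by (intro hull_minimal convex_simplex_polyhedron) auto
next
  show "simplex_polyhedron \<delta> \<subseteq> newton_polyhedron c"
  proof
    fix x
    assume x: "x \<in> simplex_polyhedron \<delta>"
    \<comment> \<open>x / s is a convex combination of the vertices and y = x - x / s is nonnegative\<close>
    define s where "s = recip_vec \<delta> \<bullet> x"
    define u where "u i = x $ i / real (\<delta> i) / s" for i
    define y where "y = (1 - 1 / s) *\<^sub>R x"
    have x_nonneg: "0 \<le> x $ i" for i
      using x by (simp add: simplex_polyhedron_def nonneg_orthant_def)
    have "1 \<le> s"
      using x by (simp add: simplex_polyhedron_def s_def)
    have \<delta>_pos: "0 < real (\<delta> i)" for i
      using \<delta> by (simp add: Suc_le_eq)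
    have y: "y \<in> nonneg_orthant"
      using x_nonneg \<open>1 \<le> s\<close> by (simp add: y_def nonneg_orthant_def)
    have "s = (\<Sum>i\<in>UNIV. x $ i / real (\<delta> i))"
      by (simp add: s_def recip_vec_def inner_vec_def)
    then have u_sum: "(\<Sum>i\<in>UNIV. u i) = 1"
      unfolding u_def sum_divide_distrib[symmetric] using \<open>1 \<le> s\<close> by simp
    have "(\<Sum>i\<in>UNIV. u i *\<^sub>R exp_vec (pure_exp i (\<delta> i))) = (1 / s) *\<^sub>R x"
      using \<delta>_pos \<open>1 \<le> s\<close>
      by (simp add: vec_eq_iff sum_component exp_vec_pure_exp axis_def u_def if_distrib cong: if_cong)
    then have "x = (\<Sum>i\<in>UNIV. u i *\<^sub>R (exp_vec (pure_exp i (\<delta> i)) + y))"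
      using \<open>1 \<le> s\<close>
      by (simp add: scaleR_add_right sum.distrib u_sum flip: scaleR_sum_left)
        (simp add: y_def scaleR_add_left[symmetric])
    also have "\<dots> \<in> newton_polyhedron c"
      unfolding newton_polyhedron_def
    proof (rule convex_sum)
      show "0 \<le> u i" for i
        using x_nonneg \<delta>_pos \<open>1 \<le> s\<close> by (simp add: u_def)
      show "exp_vec (pure_exp i (\<delta> i)) + y \<in> convex hull
          (\<Union>\<nu>\<in>mono_supp c. (\<lambda>y. exp_vec \<nu> + y) ` nonneg_orthant)" for i
        using \<delta> y by (intro hull_inc) (auto simp: mono_supp_def)
    qed (simp_all add: u_sum)
    finally show "x \<in> newton_polyhedron c" .
  qed
qed

lemma extreme_point_of_newton_polyhedron:
  assumes "x extreme_point_of newton_polyhedron c"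
  shows "x \<in> exp_vec ` mono_supp c"
proof -
  have "x \<in> (\<Union>\<nu>\<in>mono_supp c. (\<lambda>y. exp_vec \<nu> + y) ` nonneg_orthant)"
    using assms unfolding newton_polyhedron_def by (rule extreme_point_of_convex_hull)
  then obtain \<nu> y where \<nu>: "\<nu> \<in> mono_supp c" and y: "y \<in> nonneg_orthant"
    and x: "x = exp_vec \<nu> + y"
    by blast
  have mem: "exp_vec \<nu> + t *\<^sub>R y \<in> newton_polyhedron c" if "0 \<le> t" for t
  proof -
    have "t *\<^sub>R y \<in> nonneg_orthant"
      using y that by (simp add: nonneg_orthant_def)
    then show ?thesis
      unfolding newton_polyhedron_def using \<nu> by (intro hull_inc) blast
  qed
  show ?thesis
  proof (cases "y = 0")
    case True
    with \<nu> x show ?thesis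
      by simp
  next
    case False
    have "x = midpoint (exp_vec \<nu> + 0 *\<^sub>R y) (exp_vec \<nu> + 2 *\<^sub>R y)"
      by (simp add: x midpoint_def vec_eq_iff field_simps)
    with False have "x \<in> open_segment (exp_vec \<nu> + 0 *\<^sub>R y) (exp_vec \<nu> + 2 *\<^sub>R y)"
      by simp
    with assms mem[of 0] mem[of 2] show ?thesis
      unfolding extreme_point_of_def by auto
  qed
qed

lemma finite_compact_faces:
  assumes "is_poly c"
  shows "finite (compact_faces c)"
proof -
  have "compact_faces c \<subseteq> (\<lambda>A. convex hull A) ` Pow (exp_vec ` mono_supp c)"
  proof
    fix \<tau>
    assume "\<tau> \<in> compact_faces c"
    then have face: "\<tau> face_of newton_polyhedron c" and "compact \<tau>"
      by (auto simp: compact_faces_def)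
    then have "\<tau> = convex hull {x. x extreme_point_of \<tau>}"
      by (intro Krein_Milman_Minkowski face_of_imp_convex)
    moreover have "{x. x extreme_point_of \<tau>} \<subseteq> exp_vec ` mono_supp c"
      using extreme_point_of_face[OF face] extreme_point_of_newton_polyhedron by blast
    ultimately show "\<tau> \<in> (\<lambda>A. convex hull A) ` Pow (exp_vec ` mono_supp c)"
      by blast
  qed
  moreover have "finite (exp_vec ` mono_supp c)"
    using assms by (simp add: is_poly_def)
  ultimately show ?thesis
    by (meson finite_Pow_iff finite_imageI finite_subset)
qed

section \<open>Counting lattice points\<close>

lemma fps_ones_times_one_minus_X: "Abs_fps (\<lambda>_. 1) * (1 - fps_X) = (1 :: 'a::comm_ring_1 fps)"
  by (rule fps_ext) (simp add: algebra_simps mult.commute[of _ fps_X])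

lemma size_eq_sum_count: "size X = (\<Sum>i\<in>UNIV. count X (i::'n::finite))"
proof -
  have "size X = (\<Sum>i\<in>set_mset X. count X i)"
    by (simp add: size_multiset_overloaded_eq)
  also have "\<dots> = (\<Sum>i\<in>UNIV. count X i)"
    by (rule sum.mono_neutral_left) (auto simp: not_in_iff)
  finally show ?thesis .
qed

lemma bij_betw_count_multisets_of_size:
  "bij_betw count (multisets_of_size UNIV n) {k::'n::finite \<Rightarrow> nat. sum k UNIV = n}"
  by (rule bij_betw_byWitness[where f' = Abs_multiset])
    (auto simp: multisets_of_size_def size_eq_sum_count count_Abs_multiset count_inverse)

lemma finite_weak_compositions: "finite {k::'n::finite \<Rightarrow> nat. sum k UNIV = n}"
proof (rule finite_subset)
  have "k i \<le> sum k UNIV" for k :: "'n \<Rightarrow> nat" and i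
    by (rule member_le_sum) auto
  then show "{k::'n \<Rightarrow> nat. sum k UNIV = n} \<subseteq> PiE UNIV (\<lambda>_. {..n})"
    by (auto simp: PiE_def extensional_def)
qed (simp add: finite_PiE)

definition orthant_series :: "('n::finite \<Rightarrow> nat) \<Rightarrow> int fps" where
  "orthant_series c = (\<Prod>i\<in>UNIV. fps_X ^ c i * Abs_fps (\<lambda>_. 1))"

lemma orthant_series_nth:
  "orthant_series c $ n = int (card {k. sum k UNIV = n \<and> (\<forall>i. c i \<le> k i)})"
proof -
  have "orthant_series c $ n
      = (\<Sum>X\<in>multisets_of_size UNIV n. \<Prod>i\<in>UNIV. if c i \<le> count X i then 1 else 0)"
    unfolding orthant_series_def fps_prod_nth'[OF finite]
    by (intro sum.cong prod.cong refl) (simp add: fps_X_power_mult_nth)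
  also have "\<dots> = (\<Sum>k | sum k UNIV = n. \<Prod>i\<in>UNIV. if c i \<le> k i then 1 else 0)"
    by (rule sum.reindex_bij_betw[OF bij_betw_count_multisets_of_size])
  also have "\<dots> = (\<Sum>k | sum k UNIV = n. if \<forall>i. c i \<le> k i then 1 else 0)"
    by (intro sum.cong refl) (auto simp: prod.neutral)
  also have "\<dots> = int (card {k. sum k UNIV = n \<and> (\<forall>i. c i \<le> k i)})"
    using sum.inter_filter[OF finite_weak_compositions, of "\<lambda>_. 1::int" n "\<lambda>k. \<forall>i. c i \<le> k i"] by simp
  finally show ?thesis .
qed

lemma one_minus_X_power_times_orthant_series:
  "(1 - fps_X) ^ CARD('n) * orthant_series (c :: 'n::finite \<Rightarrow> nat) = fps_X ^ (\<Sum>i\<in>UNIV. c i)"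
proof -
  have "(1 - fps_X) ^ CARD('n) * orthant_series c
      = (\<Prod>i\<in>UNIV. fps_X ^ c i * (Abs_fps (\<lambda>_. 1) * (1 - fps_X)))"
    by (simp add: orthant_series_def prod.distrib mult_ac)
  then show ?thesis
    by (simp add: fps_ones_times_one_minus_X power_sum)
qed

lemma LL_minus_one_power_times_orthant_series:
  "(LL - 1) ^ CARD('n) * fps_to_fls (orthant_series (\<lambda>i. c i + 1))
     = LLinv ^ (\<Sum>i\<in>UNIV. c (i::'n::finite))"
proof -
  have inv: "LL * LLinv = 1"
    by (simp add: fls_X_inv_times_conv_shift fls_X_conv_shift_1)
  have "LL - 1 = LL * fps_to_fls (1 - fps_X)"
    using inv by (simp add: algebra_simps)
  then have "(LL - 1) ^ CARD('n) * fps_to_fls (orthant_series (\<lambda>i. c i + 1))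
      = LL ^ CARD('n) * fps_to_fls ((1 - fps_X) ^ CARD('n) * orthant_series (\<lambda>i. c i + 1))"
    by (simp add: power_mult_distrib fps_to_fls_power fls_times_fps_to_fls mult.assoc)
  also have "\<dots> = LL ^ CARD('n) * LLinv ^ (CARD('n) + (\<Sum>i\<in>UNIV. c i))"
    by (simp only: one_minus_X_power_times_orthant_series sum.distrib fps_to_fls_power
        fps_X_to_fls) (simp add: add.commute)
  also have "\<dots> = (LL * LLinv) ^ CARD('n) * LLinv ^ (\<Sum>i\<in>UNIV. c i)"
    by (simp only: power_add power_mult_distrib mult.assoc)
  finally show ?thesis
    using inv by simp
qed

definition level_series :: "('n::finite \<Rightarrow> nat) \<Rightarrow> nat \<Rightarrow> int fps" where
  "level_series \<delta> m =
     Abs_fps (\<lambda>n. int (card {k. (\<forall>i. 0 < k i) \<and> sum k UNIV = n \<and> weighted_min \<delta> k = m}))"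

lemma level_series_0:
  assumes "\<forall>i. 0 < \<delta> i"
  shows "level_series \<delta> 0 = 0"
proof -
  have "weighted_min \<delta> k \<noteq> 0" if "\<forall>i. 0 < k i" for k
    using weighted_min_pos[OF assms that] by simp
  then have "{k. (\<forall>i. 0 < k i) \<and> sum k UNIV = n \<and> weighted_min \<delta> k = 0} = {}" for n
    by blast
  then show ?thesis
    unfolding level_series_def by (intro fps_ext) (simp only: fps_nth_Abs_fps card.empty fps_zero_nth of_nat_0)
qed

lemma level_series_eq_diff:
  assumes "\<forall>i. 0 < \<delta> i" and "0 < m"
  shows "level_series \<delta> m
           = orthant_series (\<lambda>i. (m - 1) div \<delta> i + 1) - orthant_series (\<lambda>i. m div \<delta> i + 1)"
proof (rule fps_ext)
  fix n
  define G where "G l = {k. sum k UNIV = n \<and> l \<le> weighted_min \<delta> k}" for l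
  have G_eq: "G l = {k. sum k UNIV = n \<and> (\<forall>i. (l - 1) div \<delta> i + 1 \<le> k i)}" if "0 < l" for l
    using le_weighted_min_iff_lower_bounds[OF assms(1) that] by (auto simp: G_def)
  have "0 < k i" if "m \<le> weighted_min \<delta> k" for k i
    using weighted_min_le[of \<delta> k i] that assms(2) by (cases "k i") auto
  then have "{k. (\<forall>i. 0 < k i) \<and> sum k UNIV = n \<and> weighted_min \<delta> k = m} = G m - G (Suc m)"
    by (auto simp: G_def)
  moreover have sub: "G (Suc m) \<subseteq> G m" and fin: "finite (G m)"
    using finite_weak_compositions[of n] by (auto simp: G_def intro: finite_subset)
  moreover have "card (G (Suc m)) \<le> card (G m)"
    using card_mono[OF fin sub] .
  ultimately have "level_series \<delta> m $ n = int (card (G m)) - int (card (G (Suc m)))"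
    using card_Diff_subset[OF finite_subset[OF sub fin] sub] by (simp add: level_series_def)
  then show "level_series \<delta> m $ n
      = (orthant_series (\<lambda>i. (m - 1) div \<delta> i + 1) - orthant_series (\<lambda>i. m div \<delta> i + 1)) $ n"
    using assms(2) by (simp add: orthant_series_nth G_eq)
qed

lemma LL_minus_one_power_times_level_series:
  assumes "\<forall>i. 0 < \<delta> i" and "0 < m"
  shows "(LL - 1) ^ CARD('n) * fps_to_fls (level_series (\<delta> :: 'n::finite \<Rightarrow> nat) m)
           = LLinv ^ (\<Sum>i\<in>UNIV. (m - 1) div \<delta> i) - LLinv ^ (\<Sum>i\<in>UNIV. m div \<delta> i)"
  unfolding level_series_eq_diff[OF assms] fps_to_fls_minus right_diff_distrib
    LL_minus_one_power_times_orthant_series ..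

lemma level_series_generating_function:
  fixes \<delta> :: "'n::finite \<Rightarrow> nat"
  assumes "\<forall>i. 0 < \<delta> i"
  shows "fps_const ((LL - 1) ^ CARD('n)) * Abs_fps (\<lambda>m. fps_to_fls (level_series \<delta> m))
           = 1 - (1 - fps_X) * Abs_fps (\<lambda>m. LLinv ^ (\<Sum>i\<in>UNIV. m div \<delta> i))"
proof (rule fps_ext)
  fix m
  show "(fps_const ((LL - 1) ^ CARD('n)) * Abs_fps (\<lambda>m. fps_to_fls (level_series \<delta> m))) $ m
      = (1 - (1 - fps_X) * Abs_fps (\<lambda>m. LLinv ^ (\<Sum>i\<in>UNIV. m div \<delta> i))) $ m"
  proof (cases m)
    case 0
    then show ?thesis
      by (simp add: level_series_0[OF assms])
  next
    case (Suc m')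
    then show ?thesis
      using LL_minus_one_power_times_level_series[OF assms, of m]
      by (simp add: algebra_simps fps_X_mult_nth)
  qed
qed

section \<open>Compact faces of the Newton polyhedron\<close>

lemma mfun_exp_vec:
  assumes "newton_polyhedron c = simplex_polyhedron \<delta>" and "\<forall>i. 0 < \<delta> i"
  shows "mfun c (exp_vec k) = real (weighted_min \<delta> k)"
  using Inf_inner_simplex_polyhedron[OF assms(2)] by (simp add: mfun_def assms(1))

lemma exp_vec_mem_sigma_cone_iff:
  assumes "newton_polyhedron c = simplex_polyhedron \<delta>" and "\<forall>i. 0 < \<delta> i"
  shows "exp_vec k \<in> sigma_cone c \<tau> \<longleftrightarrow> supporting_face \<delta> k = \<tau>"
  using exp_vec_mem_nonneg_orthant
  by (auto simp: sigma_cone_def supporting_face_def mfun_exp_vec[OF assms] assms(1))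

lemma supporting_face_mem_compact_faces_iff:
  assumes "newton_polyhedron c = simplex_polyhedron \<delta>" and "\<forall>i. 0 < \<delta> i"
  shows "supporting_face \<delta> k \<in> compact_faces c \<longleftrightarrow> (\<forall>i. 0 < k i)"
  using supporting_face_face_of[OF assms(2)] supporting_face_nonempty[OF assms(2)]
    compact_supporting_face_iff[OF assms(2)]
  by (simp add: compact_faces_def assms(1))

lemma sum_card_sigma_cone_points_eq_card_level_set:
  assumes "is_poly c"
    and "newton_polyhedron c = simplex_polyhedron \<delta>" and "\<forall>i. 0 < \<delta> i"
  shows "(\<Sum>\<tau>\<in>compact_faces c. card {k. exp_vec k \<in> sigma_cone c \<tau> \<and> sum k UNIV = n
            \<and> mfun c (exp_vec k) = real m})
         = card {k. (\<forall>i. 0 < k i) \<and> sum k UNIV = n \<and> weighted_min \<delta> k = m}"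
proof -
  define A where "A \<tau> = {k. supporting_face \<delta> k = \<tau> \<and> sum k UNIV = n \<and> weighted_min \<delta> k = m}"
    for \<tau>
  have "{k. exp_vec k \<in> sigma_cone c \<tau> \<and> sum k UNIV = n \<and> mfun c (exp_vec k) = real m} = A \<tau>"
    for \<tau>
    by (simp add: A_def exp_vec_mem_sigma_cone_iff[OF assms(2,3)] mfun_exp_vec[OF assms(2,3)])
  moreover have "{k. (\<forall>i. 0 < k i) \<and> sum k UNIV = n \<and> weighted_min \<delta> k = m}
      = (\<Union>\<tau>\<in>compact_faces c. A \<tau>)"
    by (auto simp: A_def supporting_face_mem_compact_faces_iff[OF assms(2,3), symmetric])
  moreover have "finite (A \<tau>)" for \<tau>
    using finite_weak_compositions[of n] by (rule finite_subset[rotated]) (auto simp: A_def)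
  then have "card (\<Union>\<tau>\<in>compact_faces c. A \<tau>) = (\<Sum>\<tau>\<in>compact_faces c. card (A \<tau>))"
    using finite_compact_faces[OF assms(1)] by (intro card_UN_disjoint) (auto simp: A_def)
  ultimately show ?thesis
    by simp
qed

lemma sum_S_sigma_nth:
  assumes "is_poly c"
    and "newton_polyhedron c = simplex_polyhedron \<delta>" and "\<forall>i. 0 < \<delta> i"
  shows "(\<Sum>\<tau>\<in>compact_faces c. S_sigma c \<tau>) $ m = fps_to_fls (level_series \<delta> m)"
proof (rule fls_eqI)
  fix n :: int
  show "fls_nth ((\<Sum>\<tau>\<in>compact_faces c. S_sigma c \<tau>) $ m) n = fls_nth (fps_to_fls (level_series \<delta> m)) n"
    using sum_card_sigma_cone_points_eq_card_level_set[OF assms, of "nat n" m]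
    by (simp add: fps_sum_nth fls_nth_sum S_sigma_def level_series_def flip: of_nat_sum)
qed

theorem lemma4p4:
  fixes c :: "('n::finite \<Rightarrow> nat) \<Rightarrow> real"
    and \<delta> :: "'n \<Rightarrow> nat"
  assumes "is_poly c"
    and "convenient c"
    and "non_degenerate c"
    and "weighted_homogeneous c"
    and "\<forall>i. \<delta> i \<ge> 1 \<and> c (pure_exp i (\<delta> i)) \<noteq> 0"
  shows "B_f c - fps_X * geom_T =
         - Abs_fps (\<lambda>m. if m = 0 then 0 else LLinv ^ (\<Sum>i\<in>UNIV. m div \<delta> i))"
proof -
  have \<delta>_pos: "\<forall>i. 0 < \<delta> i"
    using assms(5) by (simp add: Suc_le_eq)
  have newton: "newton_polyhedron c = simplex_polyhedron \<delta>"
    using newton_polyhedron_eq_simplex_polyhedron[OF assms(5)]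
      weighted_homogeneous_supp_on_simplex[OF assms(1,4,5)] .
  define P where "P = Abs_fps (\<lambda>m. LLinv ^ (\<Sum>i\<in>UNIV. m div \<delta> i))"
  have "fps_const ((LL - 1) ^ CARD('n)) * (\<Sum>\<tau>\<in>compact_faces c. S_sigma c \<tau>) = 1 - (1 - fps_X) * P"
    using level_series_generating_function[OF \<delta>_pos]
    by (simp add: P_def fps_eq_iff sum_S_sigma_nth[OF assms(1) newton \<delta>_pos])
  then have "B_f c = geom_T * (1 - (1 - fps_X) * P)"
    by (simp add: B_f_def mult_ac)
  then have "B_f c - fps_X * geom_T = geom_T * (1 - fps_X) - geom_T * (1 - fps_X) * P"
    by (simp add: algebra_simps)
  also have "\<dots> = 1 - P"
    by (simp add: geom_T_def fps_ones_times_one_minus_X)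
  also have "\<dots> = - Abs_fps (\<lambda>m. if m = 0 then 0 else LLinv ^ (\<Sum>i\<in>UNIV. m div \<delta> i))"
    by (simp add: P_def fps_eq_iff)
  finally show ?thesis .
qed

end
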